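(* Let $\mathbb{F}_q$ be a finite field of characteristic $p$, let $r,v,k,t$ be positive integers, and let $f(x):=x^r h_k(x^v)^t$ where $h_k(x):=x^{k-1}+x^{k-2}+\dots+1$. Let $s:=\gcd(v,q-1)$ and $d:=(q-1)/s$. If $d=1$ then $f$ permutes $\mathbb{F}_q$ if and only if $\gcd(k,p)=\gcd(r,s)=1$. If $d=2$ then $f$ permutes $\mathbb{F}_q$ if and only if $\gcd(k,2p)=\gcd(r,s)=1$ and $k^{st}\equiv (-1)^{r+1}\pmod{p}$.
   Context: A polynomial permutes $\mathbb{F}_q$ if the induced map $\mathbb{F}_q\to\mathbb{F}_q$ is a bijection. *)

theory Defs
  imports "HOL-Computational_Algebra.Polynomial" "HOL-Number_Theory.Cong"
begin

definition hk :: "nat \<Rightarrow> 'a::comm_ring_1 poly" where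
  "hk k = (\<Sum>i<k. monom 1 i)"

definition fpoly :: "nat \<Rightarrow> nat \<Rightarrow> nat \<Rightarrow> nat \<Rightarrow> 'a::comm_ring_1 poly" where
  "fpoly r v k t = monom 1 r * (pcompose (hk k) (monom 1 v)) ^ t"

definition permutes_field :: "'a::comm_ring_1 poly \<Rightarrow> bool" where
  "permutes_field f \<longleftrightarrow> bij (poly f)"

end

theory Submission
  imports Defs "HOL-Computational_Algebra.Primes"
begin

text \<open>
  Raising to the s-th power maps the nonzero elements
  of F_q onto the group mu_d of d-th roots of unity, and (x^r g(x^s))^s = phi(x^s) with
  phi(y) = y^r g(y)^s. Hence x^r g(x^s) permutes F_q if and only if gcd(r, s) = 1 and phi
  permutes mu_d; a common prime factor l of r and s is excluded because an l-th root of unity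
  z \<noteq> 1 would give f(z) = f(1).

  Here f(x) = x^r g(x^s) with g(y) = h_k(y^(v/s))^t, and mu_d is tiny. For d = 1 the only
  condition is phi(1) = k^(st) = 1, i.e. p does not divide k. For d = 2 we have mu_2 = {1, -1},
  v/s is odd, phi(-1) = (-1)^r h_k(-1)^(st) vanishes for even k and equals (-1)^r for odd k,
  so phi permutes {1, -1} exactly when k is odd and k^(st) = (-1)^(r+1).
\<close>

lemma prime_CHAR_finite_field:
  "prime CHAR('a::{finite,field})"
  by (intro prime_CHAR_semidom finite_imp_CHAR_pos) simp

lemma one_less_card_UNIV:
  "1 < card (UNIV :: 'a::{finite,zero_neq_one} set)"
proof -
  have "card {0::'a, 1} \<le> card (UNIV :: 'a set)"
    by (rule card_mono) auto
  then show ?thesis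
    by simp
qed

lemma finite_field_power_card_minus_one:
  fixes x :: "'a::{finite,field}"
  assumes "x \<noteq> 0"
  shows "x ^ (card (UNIV :: 'a set) - 1) = 1"
proof -
  let ?P = "\<Prod>y\<in>UNIV-{0::'a}. y"
  have "x ^ card (UNIV - {0::'a}) * ?P = (\<Prod>y\<in>UNIV-{0}. x * y)"
    by (simp add: prod.distrib)
  also have "\<dots> = ?P"
    by (rule prod.reindex_bij_witness[of _ "\<lambda>y. y / x" "\<lambda>y. x * y"]) (use assms in auto)
  finally have "x ^ card (UNIV - {0::'a}) * ?P = 1 * ?P"
    by simp
  moreover have "?P \<noteq> 0"
    by simp
  ultimately have "x ^ card (UNIV - {0::'a}) = 1"
    using mult_right_cancel by blast
  then show ?thesis
    by (simp add: card_Diff_subset)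
qed

lemma power_card_minus_one_eq_one_iff:
  fixes x :: "'a::{finite,field}"
  assumes "n > 0"
  shows "x ^ (n * (card (UNIV :: 'a set) - 1)) = 1 \<longleftrightarrow> x \<noteq> 0"
proof
  show "x ^ (n * (card (UNIV :: 'a set) - 1)) = 1" if "x \<noteq> 0"
    using finite_field_power_card_minus_one[OF that] by (simp only: mult.commute[of n] power_mult power_one)
  show "x \<noteq> 0" if "x ^ (n * (card (UNIV :: 'a set) - 1)) = 1"
    using that assms one_less_card_UNIV[where 'a='a] by (auto simp: power_0_left)
qed

lemma card_power_eq_le:
  fixes a :: "'a::idom"
  assumes "n > 0"
  shows "card {x. x ^ n = a} \<le> n"
proof -
  define P where "P = monom 1 n - [:a:]"
  have "coeff P n = 1"
    using assms by (cases n) (simp_all add: P_def)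
  then have "card {x. poly P x = 0} \<le> degree P"
    by (intro card_poly_roots_bound) auto
  also have "degree P \<le> n"
    unfolding P_def by (metis degree_diff_le degree_monom_le degree_pCons_0 le0)
  also have "{x. poly P x = 0} = {x. x ^ n = a}"
    by (simp add: P_def poly_monom)
  finally show ?thesis .
qed

lemma
  fixes s d :: nat
  assumes "s * d = card (UNIV :: 'a::{finite,field} set) - 1"
  shows image_power_nonzero_eq_roots_unity: "(\<lambda>x. x ^ s) ` (UNIV - {0}) = {y::'a. y ^ d = 1}"
    and card_roots_unity_finite_field: "card {y::'a. y ^ d = 1} = d"
proof -
  let ?U = "UNIV - {0::'a}" and ?M = "{y::'a. y ^ d = 1}"
  let ?I = "(\<lambda>x. x ^ s) ` ?U"
  have "s * d > 0"
    using assms one_less_card_UNIV[where 'a='a] by linarith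
  then have "s > 0" "d > 0"
    by auto
  have image_sub: "?I \<subseteq> ?M"
  proof
    fix y assume "y \<in> ?I"
    then obtain x where "x \<noteq> 0" "y = x ^ s"
      by auto
    then show "y \<in> ?M"
      using finite_field_power_card_minus_one[of x] by (simp add: assms power_mult[symmetric])
  qed
  \<comment> \<open>Every fibre of x \<mapsto> x^s has at most s points, so the image has at least d points.\<close>
  have "s * d = card ?U"
    using assms by (simp add: card_Diff_subset)
  also have "\<dots> \<le> card (\<Union>y\<in>?I. {x. x ^ s = y})"
    by (rule card_mono) auto
  also have "\<dots> \<le> (\<Sum>y\<in>?I. card {x::'a. x ^ s = y})"
    by (rule card_UN_le) simp
  also have "\<dots> \<le> of_nat (card ?I) * s"
    using card_power_eq_le[OF \<open>s > 0\<close>] by (intro sum_bounded_above)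
  finally have "d \<le> card ?I"
    using \<open>s > 0\<close> by (simp add: mult.commute)
  moreover have "card ?I \<le> card ?M"
    using image_sub by (intro card_mono) auto
  moreover have "card ?M \<le> d"
    using card_power_eq_le[OF \<open>d > 0\<close>] .
  ultimately show "?I = ?M" "card ?M = d"
    using card_subset_eq[OF _ image_sub] by auto
qed

lemma exists_root_unity_neq_one:
  assumes "prime l" "l dvd card (UNIV :: 'a::{finite,field} set) - 1"
  shows "\<exists>z::'a. z \<noteq> 1 \<and> z ^ l = 1"
proof -
  from assms(2) obtain s where "s * l = card (UNIV :: 'a set) - 1"
    by (metis dvdE mult.commute)
  then have "card {z::'a. z ^ l = 1} = l"
    by (rule card_roots_unity_finite_field)
  moreover have "l > 1"
    using assms(1) prime_gt_1_nat by blast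
  ultimately have "\<not> {z::'a. z ^ l = 1} \<subseteq> {1}"
    using card_mono[of "{1::'a}" "{z. z ^ l = 1}"] by auto
  then show ?thesis
    by auto
qed

lemma power_eq_one_if_coprime:
  fixes z :: "'a::monoid_mult"
  assumes "z ^ m = 1" "z ^ n = 1" "coprime m n"
  shows "z = 1"
proof (cases "m = 0")
  case True
  with assms show ?thesis by simp
next
  case False
  obtain a b where "m * a = n * b + gcd m n"
    using bezout_nat[OF False] by blast
  with assms(3) have bezout: "m * a = n * b + 1"
    by simp
  have "z = (z ^ n) ^ b * z"
    using assms(2) by simp
  also have "\<dots> = (z ^ m) ^ a"
    by (simp only: power_mult[symmetric] bezout power_add power_one_right)
  finally show ?thesis
    using assms(1) by simp
qed

lemma eq_if_powers_eq_coprime: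
  fixes x y :: "'a::field"
  assumes "y \<noteq> 0" "x ^ m = y ^ m" "x ^ n = y ^ n" "coprime m n"
  shows "x = y"
proof -
  have "(x / y) ^ m = 1" "(x / y) ^ n = 1"
    using assms by (simp_all add: power_divide)
  then have "x / y = 1"
    using assms(4) by (rule power_eq_one_if_coprime)
  with assms(1) show ?thesis
    by simp
qed

lemma inj_power_mult_comp_power_imp_coprime:
  fixes g :: "'a::{finite,field} \<Rightarrow> 'a"
  assumes "s dvd card (UNIV :: 'a set) - 1" and inj: "inj (\<lambda>x. x ^ r * g (x ^ s))"
  shows "coprime r s"
proof (rule ccontr)
  assume "\<not> coprime r s"
  then obtain l where l: "prime l" "l dvd r" "l dvd s"
    using prime_factor_nat[of "gcd r s"] by (auto simp: coprime_iff_gcd_eq_1 intro: dvd_trans)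
  then obtain z :: 'a where z: "z \<noteq> 1" "z ^ l = 1"
    using exists_root_unity_neq_one assms(1) dvd_trans by blast
  have "z ^ r = 1" "z ^ s = 1"
    using l(2,3) z(2) by (metis dvdE power_mult power_one)+
  then have "(\<lambda>x. x ^ r * g (x ^ s)) z = (\<lambda>x. x ^ r * g (x ^ s)) 1"
    by simp
  with inj have "z = 1"
    by (rule injD)
  with z(1) show False
    by contradiction
qed

lemma bij_betw_roots_unity_if_bij_power_mult_comp_power:
  fixes g :: "'a::{finite,field} \<Rightarrow> 'a"
  assumes "r > 0" and sd: "s * d = card (UNIV :: 'a set) - 1"
    and bij: "bij (\<lambda>x. x ^ r * g (x ^ s))"
  shows "bij_betw (\<lambda>y. y ^ r * g y ^ s) {y. y ^ d = 1} {y. y ^ d = 1}"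
proof -
  define f where "f = (\<lambda>x. x ^ r * g (x ^ s))"
  define \<phi> where "\<phi> = (\<lambda>y. y ^ r * g y ^ s)"
  let ?U = "UNIV - {0::'a}" and ?\<mu> = "{y::'a. y ^ d = 1}"
  have f_power: "f x ^ s = \<phi> (x ^ s)" for x
    unfolding f_def \<phi>_def power_mult_distrib by (simp only: power_mult[symmetric] mult.commute[of r s])
  have power_image: "(\<lambda>x. x ^ s) ` ?U = ?\<mu>"
    using sd by (rule image_power_nonzero_eq_roots_unity)
  have "f 0 = 0"
    using assms(1) by (simp add: f_def)
  with bij have "f ` ?U = ?U"
    by (simp add: f_def[symmetric] bij_def image_set_diff)
  have "\<phi> ` ?\<mu> = (\<lambda>x. \<phi> (x ^ s)) ` ?U"
    by (simp add: power_image[symmetric] image_image)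
  also have "\<dots> = (\<lambda>x. x ^ s) ` f ` ?U"
    by (simp add: image_image f_power)
  also have "\<dots> = ?\<mu>"
    using \<open>f ` ?U = ?U\<close> power_image by simp
  finally show ?thesis
    unfolding \<phi>_def[symmetric] by (simp add: bij_betw_def eq_card_imp_inj_on)
qed

lemma inj_power_mult_comp_power_if_bij_betw_roots_unity:
  fixes g :: "'a::{finite,field} \<Rightarrow> 'a"
  assumes "r > 0" and sd: "s * d = card (UNIV :: 'a set) - 1" and "coprime r s"
    and bij: "bij_betw (\<lambda>y. y ^ r * g y ^ s) {y. y ^ d = 1} {y. y ^ d = 1}"
  shows "inj (\<lambda>x. x ^ r * g (x ^ s))"
proof -
  define f where "f = (\<lambda>x. x ^ r * g (x ^ s))"
  define \<phi> where "\<phi> = (\<lambda>y. y ^ r * g y ^ s)"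
  let ?\<mu> = "{y::'a. y ^ d = 1}"
  have f_power: "f x ^ s = \<phi> (x ^ s)" for x
    unfolding f_def \<phi>_def power_mult_distrib by (simp only: power_mult[symmetric] mult.commute[of r s])
  have "s * d > 0"
    using sd one_less_card_UNIV[where 'a='a] by linarith
  then have "s > 0" "0 \<notin> ?\<mu>"
    by (auto simp: power_0_left)
  have power_in: "x ^ s \<in> ?\<mu>" if "x \<noteq> 0" for x
    using that image_power_nonzero_eq_roots_unity[OF sd] by blast
  have bij_\<phi>: "bij_betw \<phi> ?\<mu> ?\<mu>"
    unfolding \<phi>_def by (rule bij)
  have \<phi>_nonzero: "\<phi> (x ^ s) \<noteq> 0" if "x \<noteq> 0" for x
    using bij_betw_apply[OF bij_\<phi> power_in[OF that]] \<open>0 \<notin> ?\<mu>\<close> by auto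
  have f_eq_0_iff: "f x = 0 \<longleftrightarrow> x = 0" for x
  proof
    assume "f x = 0"
    then have "\<phi> (x ^ s) = 0"
      using f_power[of x] \<open>s > 0\<close> by (metis zero_power)
    with \<phi>_nonzero[of x] show "x = 0"
      by blast
  qed (use \<open>r > 0\<close> in \<open>simp add: f_def\<close>)
  have "inj f"
  proof (rule injI)
    fix x y
    assume eq: "f x = f y"
    show "x = y"
    proof (cases "x = 0 \<or> y = 0")
      case True
      then show ?thesis
        using eq f_eq_0_iff by metis
    next
      case False
      have "\<phi> (x ^ s) = \<phi> (y ^ s)"
        using eq by (simp flip: f_power)
      then have "x ^ s = y ^ s"
        using bij_\<phi> power_in False by (auto simp: bij_betw_def dest: inj_onD)
      moreover have "g (x ^ s) \<noteq> 0"
        using \<phi>_nonzero[of x] False \<open>s > 0\<close> by (auto simp: \<phi>_def)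
      ultimately have "x ^ r = y ^ r"
        using eq by (simp add: f_def)
      with \<open>x ^ s = y ^ s\<close> \<open>coprime r s\<close> False show ?thesis
        using eq_if_powers_eq_coprime[of y x r s] by blast
    qed
  qed
  then show ?thesis
    by (simp add: f_def)
qed

theorem bij_power_mult_comp_power_iff:
  fixes g :: "'a::{finite,field} \<Rightarrow> 'a"
  assumes "r > 0" and "s * d = card (UNIV :: 'a set) - 1"
  shows "bij (\<lambda>x. x ^ r * g (x ^ s)) \<longleftrightarrow>
           coprime r s \<and> bij_betw (\<lambda>y. y ^ r * g y ^ s) {y. y ^ d = 1} {y. y ^ d = 1}"
proof
  assume bij: "bij (\<lambda>x. x ^ r * g (x ^ s))"
  have "s dvd card (UNIV :: 'a set) - 1"
    using assms(2) by (metis dvd_triv_left)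
  then show "coprime r s \<and> bij_betw (\<lambda>y. y ^ r * g y ^ s) {y. y ^ d = 1} {y. y ^ d = 1}"
    using inj_power_mult_comp_power_imp_coprime bij_is_inj[OF bij]
      bij_betw_roots_unity_if_bij_power_mult_comp_power[OF assms bij]
    by blast
next
  assume "coprime r s \<and> bij_betw (\<lambda>y. y ^ r * g y ^ s) {y. y ^ d = 1} {y. y ^ d = 1}"
  then have "inj (\<lambda>x. x ^ r * g (x ^ s))"
    using inj_power_mult_comp_power_if_bij_betw_roots_unity[OF assms] by blast
  then show "bij (\<lambda>x. x ^ r * g (x ^ s))"
    using finite_UNIV_inj_surj[OF finite_UNIV] by (simp add: bij_def)
qed

lemma coprime_prime_right_iff:
  fixes p k :: nat
  assumes "prime p"
  shows "coprime k p \<longleftrightarrow> \<not> p dvd k"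
  using assms prime_imp_coprime[of p k] by (auto simp: coprime_commute)

lemma odd_div_gcd:
  fixes v n :: nat
  assumes "v > 0" and "n = 2 * gcd v n"
  shows "odd (v div gcd v n)"
proof
  let ?g = "gcd v n"
  assume "even (v div ?g)"
  then have "2 * ?g dvd (v div ?g) * ?g"
    by (rule mult_dvd_mono) simp
  then have "2 * ?g dvd v"
    by simp
  moreover have "2 * ?g dvd n"
    using assms(2) by simp
  ultimately have "2 * ?g dvd ?g"
    by (rule gcd_greatest)
  moreover have "?g > 0"
    using assms(1) by simp
  ultimately have "2 * ?g \<le> ?g"
    by (rule dvd_imp_le)
  with \<open>?g > 0\<close> show False
    by simp
qed

lemma bij_betw_doubleton_iff:
  assumes "a \<noteq> b"
  shows "bij_betw f {a, b} {a, b} \<longleftrightarrow> f a \<in> {a, b} \<and> f b \<in> {a, b} \<and> f a \<noteq> f b"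
  using assms by (auto simp: bij_betw_def doubleton_eq_iff)

lemma sum_neg_one_power_lessThan:
  "(\<Sum>i<k. (-1::'a::comm_ring_1) ^ i) = (if even k then 0 else 1)"
  by (induction k) auto

lemma poly_fpoly:
  "poly (fpoly r v k t) x = x ^ r * (\<Sum>i<k. (x ^ v) ^ i) ^ t"
  by (simp add: fpoly_def hk_def poly_pcompose poly_monom poly_sum)

lemma permutes_field_fpoly_iff:
  assumes "r > 0" and "s * d = card (UNIV :: 'a::{finite,field} set) - 1"
  shows "permutes_field (fpoly r (s * m) k t :: 'a poly) \<longleftrightarrow>
           coprime r s \<and>
           bij_betw (\<lambda>y. y ^ r * ((\<Sum>i<k. (y ^ m) ^ i) ^ t) ^ s) {y::'a. y ^ d = 1} {y. y ^ d = 1}"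
proof -
  have "poly (fpoly r (s * m) k t) = (\<lambda>x::'a. x ^ r * (\<Sum>i<k. ((x ^ s) ^ m) ^ i) ^ t)"
    by (simp add: fun_eq_iff poly_fpoly power_mult)
  then show ?thesis
    unfolding permutes_field_def using bij_power_mult_comp_power_iff[OF assms] by simp
qed

lemma permutes_field_fpoly_iff_index_one:
  fixes r s m k t :: nat
  assumes "r > 0" "t > 0" and s: "s = card (UNIV :: 'a::{finite,field} set) - 1"
  shows "permutes_field (fpoly r (s * m) k t :: 'a poly) \<longleftrightarrow> coprime k CHAR('a) \<and> coprime r s"
proof -
  have s1: "s * 1 = card (UNIV :: 'a set) - 1"
    using s by simp
  have "permutes_field (fpoly r (s * m) k t :: 'a poly) \<longleftrightarrow>
          coprime r s \<and>
          bij_betw (\<lambda>y. y ^ r * ((\<Sum>i<k. (y ^ m) ^ i) ^ t) ^ s) {y::'a. y ^ 1 = 1} {y. y ^ 1 = 1}"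
    by (rule permutes_field_fpoly_iff[OF assms(1) s1])
  also have "\<dots> \<longleftrightarrow> coprime r s \<and> (of_nat k :: 'a) ^ (t * s) = 1"
    by (simp add: power_mult)
  also have "(of_nat k :: 'a) ^ (t * s) = 1 \<longleftrightarrow> of_nat k \<noteq> (0 :: 'a)"
    unfolding s by (rule power_card_minus_one_eq_one_iff[OF assms(2)])
  also have "\<dots> \<longleftrightarrow> coprime k CHAR('a)"
    using coprime_prime_right_iff[OF prime_CHAR_finite_field[where 'a='a], of k]
    by (simp add: of_nat_eq_0_iff_char_dvd)
  finally show ?thesis
    by (simp add: conj_commute)
qed

lemma permutes_field_fpoly_iff_index_two:
  fixes r s m k t :: nat
  assumes "r > 0" "t > 0" and s: "2 * s = card (UNIV :: 'a::{finite,field} set) - 1"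
    and "odd m"
  shows "permutes_field (fpoly r (s * m) k t :: 'a poly) \<longleftrightarrow>
           coprime k (2 * CHAR('a)) \<and> coprime r s \<and>
           [int k ^ (s * t) = (-1) ^ (r + 1)] (mod int CHAR('a))"
proof -
  define \<phi> where "\<phi> = (\<lambda>y::'a. y ^ r * ((\<Sum>i<k. (y ^ m) ^ i) ^ t) ^ s)"
  have s2: "s * 2 = card (UNIV :: 'a set) - 1"
    using s by simp
  have "s > 0"
    using s one_less_card_UNIV[where 'a='a] by simp
  have roots: "{y::'a. y ^ 2 = 1} = {1, -1}"
    by (auto simp: power2_eq_1_iff)
  have "(1::'a) \<noteq> -1"
  proof
    assume "(1::'a) = -1"
    then have "{y::'a. y ^ 2 = 1} = {1}"
      unfolding roots by (metis insert_absorb2)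
    with card_roots_unity_finite_field[OF s2] show False
      by simp
  qed
  have \<phi>_one: "\<phi> 1 = of_nat k ^ (s * t)"
    by (simp add: \<phi>_def mult.commute[of s t] flip: power_mult)
  have \<phi>_minus_one: "\<phi> (-1) = (-1) ^ r * (if even k then 0 else 1)"
    using \<open>odd m\<close> \<open>t > 0\<close> \<open>s > 0\<close> by (simp add: \<phi>_def sum_neg_one_power_lessThan)
  have "permutes_field (fpoly r (s * m) k t :: 'a poly) \<longleftrightarrow> coprime r s \<and> bij_betw \<phi> {1, -1} {1, -1}"
    using permutes_field_fpoly_iff[OF assms(1) s2] by (simp add: roots \<phi>_def)
  also have "bij_betw \<phi> {1, -1} {1, -1} \<longleftrightarrow> odd k \<and> \<phi> 1 = (-1) ^ (r + 1)"
    unfolding bij_betw_doubleton_iff[OF \<open>1 \<noteq> -1\<close>] \<phi>_minus_one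
    using \<open>1 \<noteq> -1\<close> by (cases "even r") (auto simp: eq_commute[of _ "-1"])
  also have "coprime r s \<and> odd k \<and> \<phi> 1 = (-1) ^ (r + 1) \<longleftrightarrow>
               coprime k (2 * CHAR('a)) \<and> coprime r s \<and> \<phi> 1 = (-1) ^ (r + 1)"
  proof -
    have "\<not> CHAR('a) dvd k" if "\<phi> 1 = (-1) ^ (r + 1)"
      using that \<open>s > 0\<close> \<open>t > 0\<close> by (auto simp: \<phi>_one of_nat_eq_0_iff_char_dvd[symmetric] power_0_left)
    then show ?thesis
      using coprime_prime_right_iff[OF prime_CHAR_finite_field[where 'a='a], of k] by auto
  qed
  also have "\<phi> 1 = (-1) ^ (r + 1) \<longleftrightarrow> [int k ^ (s * t) = (-1) ^ (r + 1)] (mod int CHAR('a))"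
    unfolding \<phi>_one of_int_eq_iff_cong_CHAR[symmetric] by simp
  finally show ?thesis .
qed

theorem proposition3p1:
  fixes r v k t :: nat
  assumes "r > 0" "v > 0" "k > 0" "t > 0"
  defines "q \<equiv> card (UNIV :: 'a::{finite,field} set)"
      and "p \<equiv> CHAR('a)"
  defines "s \<equiv> gcd v (q - 1)"
  defines "d \<equiv> (q - 1) div s"
  shows "(d = 1 \<longrightarrow>
            (permutes_field (fpoly r v k t :: 'a poly) \<longleftrightarrow> gcd k p = 1 \<and> gcd r s = 1))
       \<and> (d = 2 \<longrightarrow>
            (permutes_field (fpoly r v k t :: 'a poly) \<longleftrightarrow>
               gcd k (2 * p) = 1 \<and> gcd r s = 1 \<and>
               [int k ^ (s * t) = (-1) ^ (r + 1)] (mod int p)))"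
proof -
  define m where "m = v div s"
  have v: "v = s * m"
    unfolding m_def s_def by simp
  have sd: "s * d = q - 1"
    unfolding d_def s_def by simp
  show ?thesis
  proof (intro conjI impI)
    assume "d = 1"
    with sd have "s = q - 1"
      by simp
    then show "permutes_field (fpoly r v k t :: 'a poly) \<longleftrightarrow> gcd k p = 1 \<and> gcd r s = 1"
      unfolding v q_def p_def coprime_iff_gcd_eq_1[symmetric]
      by (rule permutes_field_fpoly_iff_index_one[OF assms(1,4)])
  next
    assume "d = 2"
    with sd have s2: "2 * s = q - 1"
      by simp
    then have "odd m"
      using odd_div_gcd[of v "q - 1"] assms(2) unfolding m_def s_def by simp
    with s2 show "permutes_field (fpoly r v k t :: 'a poly) \<longleftrightarrow>
            gcd k (2 * p) = 1 \<and> gcd r s = 1 \<and> [int k ^ (s * t) = (-1) ^ (r + 1)] (mod int p)"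
      unfolding v q_def p_def coprime_iff_gcd_eq_1[symmetric]
      by (intro permutes_field_fpoly_iff_index_two[OF assms(1,4)])
  qed
qed

end
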